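(* Let $K_1,K_2$ be simplicial complexes on $[m]$, $W=K_1\cap K_2$, $Z\subset W$ with $\varnothing\notin Z$ and $O_{K_1\cup K_2}(Z)\subset W$, and $K=K_1\#^ZK_2=\operatorname{Del}_Z(K_1\cup K_2)$. Let $\mathcal I_Z\subset\mathbb Z[K_1\cup K_2]$ be the ideal generated by $x_\sigma$, $\sigma\in Z$. Let $B$ be an integer $r\times m$ matrix of rank $r$, $u_i=\sum_jB_{ij}x_j$, $S=\mathbb Z[u_1,\dots,u_r]$, with $\mathbb Z$ an $S$-module via $u_i\mapsto0$. If $\operatorname{Tor}_1^S(\mathbb Z[K_1],\mathbb Z)=\operatorname{Tor}_1^S(\mathbb Z[K_2],\mathbb Z)=\operatorname{Tor}_1^S(\mathbb Z[K],\mathbb Z)=\operatorname{Tor}_1^S(\mathbb Z[W],\mathbb Z)=0$, then $$\operatorname{Tor}_0^S(\mathbb Z[K],\mathbb Z)\cong\operatorname{Tor}_0^S(\mathbb Z[K_1],\mathbb Z)\ \#^{\operatorname{Tor}_0^S(\mathcal I_Z,\mathbb Z)}_{\operatorname{Tor}_0^S(\mathbb Z[W],\mathbb Z)}\ \operatorname{Tor}_0^S(\mathbb Z[K_2],\mathbb Z),$$ where the maps $\operatorname{Tor}_0^S(\mathbb Z[K_i],\mathbb Z)\to\operatorname{Tor}_0^S(\mathbb Z[W],\mathbb Z)$ are induced by the natural quotient maps and $\operatorname{Tor}_0^S(\mathcal I_Z,\mathbb Z)\to\operatorname{Tor}_0^S(\mathbb Z[K_i],\mathbb Z)$ by $\mathcal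 I_Z\subset\mathbb Z[K_1\cup K_2]\to\mathbb Z[K_i]$.
   Context: $\mathbb Z[K]=\mathbb Z[x_1,\dots,x_m]/\langle x_\sigma:\sigma\notin K\rangle$ is the Stanley–Reisner ring, $x_\sigma=\prod_{i\in\sigma}x_i$. $O_K(Z)=\{\sigma\in K:\sigma\supseteq\tau$ for some $\tau\in Z\}$, $\operatorname{Del}_Z(K)=K\setminus O_K(Z)$. Connected sum of rings: given ring maps $\epsilon_A:A\to C$, $\epsilon_B:B\to C$, a $C$-module $V$ and module maps $\iota_A:V\to A$, $\iota_B:V\to B$ with $\epsilon_A\iota_A=\epsilon_B\iota_B$, $A\#_C^VB:=(A\times_CB)/\{(\iota_A(v),\iota_B(v)):v\in V\}$ with $A\times_CB=\{(a,b):\epsilon_A(a)=\epsilon_B(b)\}$. *)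

theory Defs
  imports "HOL-Algebra.QuotRing" "HOL-Library.Poly_Mapping" "HOL-Analysis.Cartesian_Space"
begin

section \<open>Polynomial ring Z[x_1,...,x_m]; the vertex set [m] is the finite type 'n\<close>

type_synonym 'n mpoly = "('n \<Rightarrow>\<^sub>0 nat) \<Rightarrow>\<^sub>0 int"

definition PR :: "'n mpoly ring" where
  "PR = \<lparr>carrier = UNIV, mult = (*), one = 1, zero = 0, add = (+)\<rparr>"

definition var :: "'n \<Rightarrow> 'n mpoly" where
  "var i = Poly_Mapping.single (Poly_Mapping.single i 1) 1"

definition xs :: "'n set \<Rightarrow> 'n mpoly" where
  "xs \<sigma> = (\<Prod>i\<in>\<sigma>. var i)"

definition simplicial_complex :: "'n set set \<Rightarrow> bool" where
  "simplicial_complex K \<longleftrightarrow> {} \<in> K \<and> (\<forall>\<sigma>\<in>K. \<forall>\<tau>. \<tau> \<subseteq> \<sigma> \<longrightarrow> \<tau> \<in> K)"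

definition open_star :: "'n set set \<Rightarrow> 'n set set \<Rightarrow> 'n set set" where
  "open_star K Z = {\<sigma>\<in>K. \<exists>\<tau>\<in>Z. \<tau> \<subseteq> \<sigma>}"

definition Del :: "'n set set \<Rightarrow> 'n set set \<Rightarrow> 'n set set" where
  "Del Z K = K - open_star K Z"

text \<open>Stanley--Reisner ideal: Z[K] = PR Quot SR_ideal K.\<close>
definition SR_ideal :: "'n set set \<Rightarrow> 'n mpoly set" where
  "SR_ideal K = genideal PR {xs \<sigma> | \<sigma>. \<sigma> \<notin> K}"

text \<open>Ideal of Z[x] generated by the x_sigma, sigma in Z; its image in Z[K1 u K2]
  is the ideal I_Z, represented as the subquotient (J_Z + I_{K1 u K2}) / I_{K1 u K2}.\<close>
definition face_ideal :: "'n set set \<Rightarrow> 'n mpoly set" where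
  "face_ideal Z = genideal PR {xs \<sigma> | \<sigma>. \<sigma> \<in> Z}"

definition setsum :: "'n mpoly set \<Rightarrow> 'n mpoly set \<Rightarrow> 'n mpoly set" where
  "setsum A B = {a + b | a b. a \<in> A \<and> b \<in> B}"

definition lin_form :: "int^'n^'r \<Rightarrow> 'r \<Rightarrow> 'n mpoly" where
  "lin_form B i = (\<Sum>j\<in>UNIV. of_int (B $ i $ j) * var j)"

definition u_mult :: "int^'n^'r \<Rightarrow> 'n mpoly set \<Rightarrow> 'n mpoly set" where
  "u_mult B N = {(\<Sum>i\<in>(UNIV::'r set). lin_form B i * n i) | n. \<forall>i. n i \<in> N}"

text \<open>An S-module M given as subquotient N1/N2 of P (N2 \<subseteq> N1 P-submodules).
  Tor_0^S(M,Z) = M / (u)M = N1 / (N2 + (u)N1); its elements are the cosets below.\<close>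
definition tor0_sub :: "int^'n^'r \<Rightarrow> 'n mpoly set \<Rightarrow> 'n mpoly set \<Rightarrow> 'n mpoly set" where
  "tor0_sub B N1 N2 = setsum N2 (u_mult B N1)"

definition tor0_set :: "int^'n^'r \<Rightarrow> 'n mpoly set \<Rightarrow> 'n mpoly set \<Rightarrow> 'n mpoly set set" where
  "tor0_set B N1 N2 = {tor0_sub B N1 N2 +>\<^bsub>PR\<^esub> n | n. n \<in> N1}"

text \<open>For the cyclic module Z[K] = P / I_K, Tor_0^S(Z[K],Z) = Z[K]/(u)Z[K] is a ring.\<close>
definition tor0_ring :: "int^'n^'r \<Rightarrow> 'n mpoly set \<Rightarrow> 'n mpoly set ring" where
  "tor0_ring B I = PR Quot (tor0_sub B UNIV I)"

text \<open>Tor_1^S(M,Z) = 0, computed with the Koszul resolution of Z over S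
  (a free resolution since the u_i have full rank): H_1 of K(u) \<otimes>_S M vanishes,
  i.e. every cycle (m_i) with sum u_i m_i = 0 in M is a Koszul boundary
  (sum_j u_j (a_ji - a_ij))_i.\<close>
definition tor1_zero :: "int^'n^'r \<Rightarrow> 'n mpoly set \<Rightarrow> 'n mpoly set \<Rightarrow> bool" where
  "tor1_zero B N1 N2 \<longleftrightarrow>
     (\<forall>m::'r \<Rightarrow> 'n mpoly. (\<forall>i. m i \<in> N1) \<and> (\<Sum>i\<in>UNIV. lin_form B i * m i) \<in> N2 \<longrightarrow>
        (\<exists>a::'r \<Rightarrow> 'r \<Rightarrow> 'n mpoly. (\<forall>j k. a j k \<in> N1) \<and>
           (\<forall>i. m i - (\<Sum>j\<in>UNIV. lin_form B j * (a j i - a i j)) \<in> N2)))"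

text \<open>Map between such quotients induced by the identity of P (natural quotient maps,
  and the inclusion I_Z into Z[K1 u K2] followed by the quotient to Z[K_i]).\<close>
definition induced :: "'n mpoly set \<Rightarrow> 'n mpoly set \<Rightarrow> 'n mpoly set" where
  "induced L X = L +>\<^bsub>PR\<^esub> (SOME p. p \<in> X)"

definition fiber_prod :: "('a,'c) ring_scheme \<Rightarrow> ('b,'d) ring_scheme \<Rightarrow> ('e,'f) ring_scheme
    \<Rightarrow> ('a \<Rightarrow> 'e) \<Rightarrow> ('b \<Rightarrow> 'e) \<Rightarrow> ('a \<times> 'b) ring" where
  "fiber_prod A B C eA eB =
     \<lparr>carrier = {(a, b). a \<in> carrier A \<and> b \<in> carrier B \<and> eA a = eB b},
      mult = (\<lambda>(a, b) (a', b'). (a \<otimes>\<^bsub>A\<^esub> a', b \<otimes>\<^bsub>B\<^esub> b')),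
      one = (\<one>\<^bsub>A\<^esub>, \<one>\<^bsub>B\<^esub>),
      zero = (\<zero>\<^bsub>A\<^esub>, \<zero>\<^bsub>B\<^esub>),
      add = (\<lambda>(a, b) (a', b'). (a \<oplus>\<^bsub>A\<^esub> a', b \<oplus>\<^bsub>B\<^esub> b'))\<rparr>"

definition conn_sum :: "('a,'c) ring_scheme \<Rightarrow> ('b,'d) ring_scheme \<Rightarrow> ('e,'f) ring_scheme
    \<Rightarrow> ('a \<Rightarrow> 'e) \<Rightarrow> ('b \<Rightarrow> 'e) \<Rightarrow> 'v set \<Rightarrow> ('v \<Rightarrow> 'a) \<Rightarrow> ('v \<Rightarrow> 'b) \<Rightarrow> ('a \<times> 'b) set ring" where
  "conn_sum A B C eA eB V iA iB = fiber_prod A B C eA eB Quot {(iA v, iB v) | v. v \<in> V}"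

end

theory Submission
  imports Defs
begin

text \<open>Put \<open>U = (u)P\<close> and \<open>T_i = I_{K_i} + U\<close>. Because \<open>W = K_1 \<inter> K_2\<close> we have
  \<open>I_W = I_{K_1} + I_{K_2}\<close>, so \<open>p \<mapsto> (p + T_1, p + T_2)\<close> maps \<open>P\<close> onto the fibre product of
  the \<open>P/T_i\<close> over \<open>P/(I_W + U)\<close>, with kernel \<open>T_1 \<inter> T_2\<close>. Vanishing of \<open>Tor_1(\<int>[W])\<close> says
  that every Koszul cycle with coefficients in \<open>I_W\<close> is a boundary; this splits each element of
  \<open>U \<inter> (I_{K_1} + I_{K_2})\<close> into elements of \<open>U \<inter> I_{K_i}\<close>, whence
  \<open>T_1 \<inter> T_2 = (I_{K_1} \<inter> I_{K_2}) + U = I_{K_1 \<union> K_2} + U\<close>. Since \<open>I_K = I_Z + I_{K_1 \<union> K_2}\<close>,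
  dividing the fibre product by the image of \<open>I_K\<close>, which is the image of \<open>Tor_0(I_Z)\<close>,
  gives \<open>P/(I_K + U) = Tor_0(\<int>[K])\<close>.\<close>

lemma (in ring_hom_ring) img_ideal:
  assumes surj: "h ` carrier R = carrier S" and I: "ideal I R"
  shows "ideal (h ` I) S"
proof -
  interpret I: ideal I R by (rule I)
  show ?thesis
  proof (rule idealI[OF S.ring_axioms])
    show "subgroup (h ` I) (add_monoid S)"
    proof (rule S.add.subgroupI)
      show "h ` I \<subseteq> carrier S" using I.Icarr by auto
      show "h ` I \<noteq> {}" using I.zero_closed by blast
      show "\<ominus>\<^bsub>S\<^esub> a \<in> h ` I" if "a \<in> h ` I" for a
        using that I.Icarr by (auto intro!: image_eqI[of _ h "\<ominus> _"] simp: hom_a_inv)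
      show "a \<oplus>\<^bsub>S\<^esub> b \<in> h ` I" if ab: "a \<in> h ` I" "b \<in> h ` I" for a b
      proof -
        obtain i j where "i \<in> I" "a = h i" "j \<in> I" "b = h j" using ab by auto
        then show ?thesis using I.Icarr by (auto intro!: image_eqI[of _ h "i \<oplus> j"])
      qed
    qed
    show "x \<otimes>\<^bsub>S\<^esub> a \<in> h ` I" if ax: "a \<in> h ` I" "x \<in> carrier S" for a x
    proof -
      obtain i r where "i \<in> I" "a = h i" "r \<in> carrier R" "x = h r"
        using ax unfolding surj[symmetric] by blast
      then show ?thesis using I.Icarr I.I_l_closed by (auto intro!: image_eqI[of _ h "r \<otimes> i"])
    qed
    show "a \<otimes>\<^bsub>S\<^esub> x \<in> h ` I" if ax: "a \<in> h ` I" "x \<in> carrier S" for a x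
    proof -
      obtain i r where "i \<in> I" "a = h i" "r \<in> carrier R" "x = h r"
        using ax unfolding surj[symmetric] by blast
      then show ?thesis using I.Icarr I.I_r_closed by (auto intro!: image_eqI[of _ h "i \<otimes> r"])
    qed
  qed
qed

lemma (in ring_hom_ring) img_mem_iff_set_add_kernel:
  assumes J: "ideal J R" and r: "r \<in> carrier R"
  shows "h r \<in> h ` J \<longleftrightarrow> r \<in> J <+>\<^bsub>R\<^esub> a_kernel R S h"
proof -
  interpret J: ideal J R by (rule J)
  show ?thesis
  proof
    assume "h r \<in> h ` J"
    then obtain j where j: "j \<in> J" "h r = h j" by auto
    have "h (r \<ominus> j) = h j \<oplus>\<^bsub>S\<^esub> \<ominus>\<^bsub>S\<^esub> h j"
      using r J.Icarr j by (simp add: R.minus_eq)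
    also have "\<dots> = \<zero>\<^bsub>S\<^esub>" using S.r_neg[OF hom_closed[OF J.Icarr[OF j(1)]]] .
    finally have "r \<ominus> j \<in> a_kernel R S h"
      using R.minus_closed[OF r J.Icarr[OF j(1)]] unfolding a_kernel_def' by blast
    moreover have "r = j \<oplus> (r \<ominus> j)"
    proof -
      have "r \<ominus> j = \<ominus> j \<oplus> r" using r J.Icarr[OF j(1)] by (simp add: R.minus_eq R.add.m_comm)
      then show ?thesis using R.r_neg2[OF J.Icarr[OF j(1)] r] by simp
    qed
    ultimately show "r \<in> J <+>\<^bsub>R\<^esub> a_kernel R S h"
      using j(1) unfolding set_add_def' by blast
  next
    assume "r \<in> J <+>\<^bsub>R\<^esub> a_kernel R S h"
    then obtain j k where j: "j \<in> J" and k: "k \<in> carrier R" "h k = \<zero>\<^bsub>S\<^esub>" and "r = j \<oplus> k"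
      unfolding set_add_def' a_kernel_def' by blast
    have "h r = h j \<oplus>\<^bsub>S\<^esub> h k" using J.Icarr[OF j] k(1) \<open>r = j \<oplus> k\<close> by simp
    then have "h r = h j" using J.Icarr[OF j] k(2) by simp
    then show "h r \<in> h ` J" using j by blast
  qed
qed

lemma (in ring_hom_ring) FactRing_iso_Quot_img:
  assumes surj: "h ` carrier R = carrier S" and J: "ideal J R"
  shows "R Quot (J <+>\<^bsub>R\<^esub> a_kernel R S h) \<simeq> S Quot (h ` J)"
proof -
  interpret J: ideal J R by (rule J)
  interpret hJ: ideal "h ` J" S by (rule img_ideal[OF surj J])
  define g where "g = (\<lambda>s. h ` J +>\<^bsub>S\<^esub> s) \<circ> h"
  have g_hom: "g \<in> ring_hom R (S Quot h ` J)"
    unfolding g_def by (rule ring_hom_trans[OF homh hJ.rcos_ring_hom])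
  interpret G: ring_hom_ring R "S Quot h ` J" g
    by (rule ring_hom_ringI2[OF R.ring_axioms hJ.quotient_is_ring g_hom])
  have g_surj: "g ` carrier R = carrier (S Quot h ` J)"
  proof -
    have "carrier (S Quot h ` J) = (\<lambda>s. h ` J +>\<^bsub>S\<^esub> s) ` carrier S"
      by (auto simp: FactRing_def A_RCOSETS_def')
    then show ?thesis unfolding g_def image_comp[symmetric] surj ..
  qed
  have g_zero: "g r = \<zero>\<^bsub>S Quot h ` J\<^esub> \<longleftrightarrow> h r \<in> h ` J" if r: "r \<in> carrier R" for r
  proof -
    have "g r = \<zero>\<^bsub>S Quot h ` J\<^esub> \<longleftrightarrow> h ` J +>\<^bsub>S\<^esub> h r = h ` J"
      unfolding g_def FactRing_def by simp
    moreover have "h r \<in> carrier S" using r by (rule hom_closed)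
    ultimately show ?thesis
      using hJ.rcos_const_imp_mem[of "h r"] S.a_rcos_zero[OF hJ.is_ideal, of "h r"] by blast
  qed
  have "a_kernel R S h \<subseteq> carrier R" unfolding a_kernel_def' by blast
  then have J_ker_carr: "J <+>\<^bsub>R\<^esub> a_kernel R S h \<subseteq> carrier R"
    by (rule R.set_add_closed[OF J.a_subset])
  have "a_kernel R (S Quot h ` J) g = J <+>\<^bsub>R\<^esub> a_kernel R S h"
  proof (intro equalityI subsetI)
    fix r assume "r \<in> a_kernel R (S Quot h ` J) g"
    then show "r \<in> J <+>\<^bsub>R\<^esub> a_kernel R S h"
      using g_zero img_mem_iff_set_add_kernel[OF J] unfolding a_kernel_def' by blast
  next
    fix r assume "r \<in> J <+>\<^bsub>R\<^esub> a_kernel R S h"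
    moreover from this have "r \<in> carrier R" using J_ker_carr by blast
    ultimately show "r \<in> a_kernel R (S Quot h ` J) g"
      using g_zero img_mem_iff_set_add_kernel[OF J] unfolding a_kernel_def' by blast
  qed
  then show ?thesis using G.FactRing_iso[OF g_surj] by simp
qed

lemma PR_simps [simp]:
  "carrier PR = UNIV" "mult PR = (*)" "one PR = 1" "zero PR = 0" "add PR = (+)"
  by (simp_all add: PR_def)

lemma cring_PR: "cring PR"
proof (rule cringI)
  show "abelian_group PR"
    by (rule abelian_groupI) (simp_all add: algebra_simps, metis add.right_inverse)
  show "comm_monoid PR"
    by (rule comm_monoidI) (simp_all add: algebra_simps)
  show "(x \<oplus>\<^bsub>PR\<^esub> y) \<otimes>\<^bsub>PR\<^esub> z = x \<otimes>\<^bsub>PR\<^esub> z \<oplus>\<^bsub>PR\<^esub> y \<otimes>\<^bsub>PR\<^esub> z" for x y z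
    by (simp add: algebra_simps)
qed

interpretation P: cring PR by (rule cring_PR)

lemma PR_a_inv [simp]: "\<ominus>\<^bsub>PR\<^esub> x = - x"
  by (metis P.add.inv_equality PR_simps(1,4,5) UNIV_I add.commute add.right_inverse)

lemma PR_rcos: "H +>\<^bsub>PR\<^esub> a = {h + a | h. h \<in> H}"
  by (auto simp: a_r_coset_def r_coset_def)

lemma set_add_PR: "A <+>\<^bsub>PR\<^esub> B = setsum A B"
  by (auto simp: set_add_def' setsum_def)

lemma ideal_PR_I:
  assumes "0 \<in> I" "\<And>x y. x \<in> I \<Longrightarrow> y \<in> I \<Longrightarrow> x + y \<in> I" "\<And>x. x \<in> I \<Longrightarrow> - x \<in> I"
    "\<And>x y. x \<in> I \<Longrightarrow> y * x \<in> I"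
  shows "ideal I PR"
proof (rule idealI)
  show "ring PR" by (rule P.ring_axioms)
  show "subgroup I (add_monoid PR)"
    by (rule P.add.subgroupI) (use assms in auto)
  show "x \<otimes>\<^bsub>PR\<^esub> a \<in> I" "a \<otimes>\<^bsub>PR\<^esub> x \<in> I" if "a \<in> I" for a x
    using assms that by (simp_all add: mult.commute)
qed

context
  fixes I :: "'n mpoly set"
  assumes I: "ideal I PR"
begin

lemma ideal_PR_zero: "0 \<in> I"
  using additive_subgroup.zero_closed[of I PR] ideal.axioms(1)[OF I] by simp

lemma ideal_PR_add: "x \<in> I \<Longrightarrow> y \<in> I \<Longrightarrow> x + y \<in> I"
  using additive_subgroup.a_closed[of I PR] ideal.axioms(1)[OF I] by simp

lemma ideal_PR_uminus: "x \<in> I \<Longrightarrow> - x \<in> I"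
  using additive_subgroup.a_inv_closed[of I PR] ideal.axioms(1)[OF I] by simp

lemma ideal_PR_diff: "x \<in> I \<Longrightarrow> y \<in> I \<Longrightarrow> x - y \<in> I"
  using ideal_PR_add ideal_PR_uminus by (metis diff_conv_add_uminus)

lemma ideal_PR_mult_left: "x \<in> I \<Longrightarrow> y * x \<in> I"
  using ideal.I_l_closed[OF I, of x y] by simp

lemma ideal_PR_sum: "(\<And>x. x \<in> S \<Longrightarrow> f x \<in> I) \<Longrightarrow> sum f S \<in> I"
  by (induction S rule: infinite_finite_induct) (auto simp: ideal_PR_zero ideal_PR_add)

lemma PR_rcos_eq_iff: "I +>\<^bsub>PR\<^esub> a = I +>\<^bsub>PR\<^esub> b \<longleftrightarrow> a - b \<in> I"
proof
  assume "I +>\<^bsub>PR\<^esub> a = I +>\<^bsub>PR\<^esub> b"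
  moreover have "a \<in> I +>\<^bsub>PR\<^esub> a" using ideal_PR_zero by (force simp: PR_rcos)
  ultimately obtain h where "h \<in> I" "a = h + b" by (auto simp: PR_rcos)
  then show "a - b \<in> I" by simp
next
  assume d: "a - b \<in> I"
  show "I +>\<^bsub>PR\<^esub> a = I +>\<^bsub>PR\<^esub> b"
  proof (auto simp: PR_rcos)
    show "\<exists>h'. h + a = h' + b \<and> h' \<in> I" if "h \<in> I" for h
      using that d by (intro exI[of _ "h + (a - b)"]) (simp add: ideal_PR_add)
    show "\<exists>h'. h + b = h' + a \<and> h' \<in> I" if "h \<in> I" for h
      using that d by (intro exI[of _ "h - (a - b)"]) (simp add: ideal_PR_diff)
  qed
qed

lemma PR_rcos_eq_self_iff: "I +>\<^bsub>PR\<^esub> a = I \<longleftrightarrow> a \<in> I"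
  using PR_rcos_eq_iff[of a 0] by (simp add: PR_rcos)

lemma Quot_PR_add: "(I +>\<^bsub>PR\<^esub> p) \<oplus>\<^bsub>PR Quot I\<^esub> (I +>\<^bsub>PR\<^esub> q) = I +>\<^bsub>PR\<^esub> (p + q)"
  using ring_hom_add[OF ideal.rcos_ring_hom[OF I], of p q] by simp

lemma Quot_PR_mult: "(I +>\<^bsub>PR\<^esub> p) \<otimes>\<^bsub>PR Quot I\<^esub> (I +>\<^bsub>PR\<^esub> q) = I +>\<^bsub>PR\<^esub> (p * q)"
  using ring_hom_mult[OF ideal.rcos_ring_hom[OF I], of p q] by simp

end

lemma carrier_Quot_PR: "carrier (PR Quot T) = {T +>\<^bsub>PR\<^esub> p | p. True}"
  by (auto simp: FactRing_def A_RCOSETS_def RCOSETS_def a_r_coset_def)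

lemma genideal_PR: "ideal (genideal PR S) PR"
  by (rule P.genideal_ideal) simp

lemma genideal_PR_self: "x \<in> S \<Longrightarrow> x \<in> genideal PR S"
  using P.genideal_self[of S] by auto

lemma genideal_PR_minimal: "ideal I PR \<Longrightarrow> S \<subseteq> I \<Longrightarrow> genideal PR S \<subseteq> I"
  by (rule P.genideal_minimal)

lemma setsum_memI: "a \<in> I \<Longrightarrow> b \<in> J \<Longrightarrow> a + b \<in> setsum I J"
  unfolding setsum_def by blast

lemma setsum_mono: "I \<subseteq> I' \<Longrightarrow> J \<subseteq> J' \<Longrightarrow> setsum I J \<subseteq> setsum I' J'"
  unfolding setsum_def by blast

lemma setsum_ideal: "ideal I PR \<Longrightarrow> ideal J PR \<Longrightarrow> ideal (setsum I J) PR"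
  using P.add_ideals[of I J] by (simp add: set_add_PR)

lemma mem_setsum_left: "ideal J PR \<Longrightarrow> a \<in> I \<Longrightarrow> a \<in> setsum I J"
  using setsum_memI[of a I 0 J] ideal_PR_zero[of J] by simp

lemma mem_setsum_right: "ideal I PR \<Longrightarrow> b \<in> J \<Longrightarrow> b \<in> setsum I J"
  using setsum_memI[of 0 I b J] ideal_PR_zero[of I] by simp

lemma setsum_absorb:
  assumes "ideal J PR" "ideal U PR" "I \<subseteq> J" "0 \<in> I"
  shows "setsum J (setsum I U) = setsum J U"
proof
  show "setsum J (setsum I U) \<subseteq> setsum J U"
  proof
    fix x assume "x \<in> setsum J (setsum I U)"
    then obtain j i u where "x = (j + i) + u" "j \<in> J" "i \<in> I" "u \<in> U"
      unfolding setsum_def by (auto simp: add.assoc)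
    then show "x \<in> setsum J U" using assms ideal_PR_add[of J] setsum_memI by blast
  qed
  show "setsum J U \<subseteq> setsum J (setsum I U)"
    using setsum_memI[OF assms(4)] setsum_mono[of J J U "setsum I U"] by force
qed

lemma u_mult_ideal: "ideal (u_mult B UNIV) PR"
proof (rule ideal_PR_I)
  show "0 \<in> u_mult B UNIV" unfolding u_mult_def by (auto intro!: exI[of _ "\<lambda>_. 0"])
  show "x + y \<in> u_mult B UNIV" if "x \<in> u_mult B UNIV" "y \<in> u_mult B UNIV" for x y
  proof -
    from that obtain n n' where
      "x = (\<Sum>i\<in>UNIV. lin_form B i * n i)" "y = (\<Sum>i\<in>UNIV. lin_form B i * n' i)"
      unfolding u_mult_def by blast
    then show ?thesis unfolding u_mult_def
      by (auto intro!: exI[of _ "\<lambda>i. n i + n' i"] simp: sum.distrib algebra_simps)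
  qed
  show "- x \<in> u_mult B UNIV" if "x \<in> u_mult B UNIV" for x
  proof -
    from that obtain n where "x = (\<Sum>i\<in>UNIV. lin_form B i * n i)"
      unfolding u_mult_def by blast
    then show ?thesis unfolding u_mult_def
      by (auto intro!: exI[of _ "\<lambda>i. - n i"] simp: sum_negf)
  qed
  show "y * x \<in> u_mult B UNIV" if "x \<in> u_mult B UNIV" for x y
  proof -
    from that obtain n where "x = (\<Sum>i\<in>UNIV. lin_form B i * n i)"
      unfolding u_mult_def by blast
    then show ?thesis unfolding u_mult_def
      by (auto intro!: exI[of _ "\<lambda>i. y * n i"] simp: sum_distrib_left algebra_simps)
  qed
qed

lemma u_mult_subset: "u_mult B N \<subseteq> u_mult B UNIV"
  unfolding u_mult_def by blast

lemma koszul_boundary_sum_zero: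
  fixes u :: "'r::finite \<Rightarrow> 'a::comm_ring"
  shows "(\<Sum>i\<in>UNIV. u i * (\<Sum>j\<in>UNIV. u j * (a j i - a i j))) = 0"
proof -
  have "(\<Sum>i\<in>UNIV. u i * (\<Sum>j\<in>UNIV. u j * (a j i - a i j))) =
      (\<Sum>i\<in>UNIV. \<Sum>j\<in>UNIV. u i * u j * a j i) - (\<Sum>i\<in>UNIV. \<Sum>j\<in>UNIV. u i * u j * a i j)"
    by (simp add: sum_distrib_left algebra_simps sum_subtractf)
  also have "(\<Sum>i\<in>UNIV. \<Sum>j\<in>UNIV. u i * u j * a j i) = (\<Sum>i\<in>UNIV. \<Sum>j\<in>UNIV. u i * u j * a i j)"
    by (subst sum.swap) (simp add: ac_simps)
  finally show ?thesis by simp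
qed

text \<open>Write \<open>x = \<Sum> u_i m_i\<close>; by \<open>Tor_1 = 0\<close> the cycle \<open>m\<close> is, modulo \<open>I_1 + I_2\<close>, a Koszul
  boundary, which contributes nothing to \<open>\<Sum> u_i m_i\<close>. Splitting the remaining coefficients
  along \<open>I_1 + I_2\<close> splits \<open>x\<close>.\<close>
lemma tor1_zero_split:
  fixes B :: "int^'n::finite^'r::finite"
  assumes tor: "tor1_zero B UNIV (setsum I1 I2)"
    and I1: "ideal I1 PR" and I2: "ideal I2 PR"
    and xU: "x \<in> u_mult B UNIV" and xI: "x \<in> setsum I1 I2"
  obtains y1 y2 where "y1 \<in> I1 \<inter> u_mult B UNIV" "y2 \<in> I2 \<inter> u_mult B UNIV" "x = y1 + y2"
proof -
  obtain m where xm: "x = (\<Sum>i\<in>UNIV. lin_form B i * m i)"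
    using xU unfolding u_mult_def by blast
  define bd where "bd a i = (\<Sum>j\<in>UNIV. lin_form B j * (a j i - a i j))" for a i
  obtain a where "\<And>i. m i - bd a i \<in> setsum I1 I2"
    using tor xI xm unfolding tor1_zero_def bd_def by blast
  then have "\<forall>i. \<exists>f g. f \<in> I1 \<and> g \<in> I2 \<and> m i - bd a i = f + g"
    unfolding setsum_def by blast
  then obtain f g where fg: "\<And>i. f i \<in> I1" "\<And>i. g i \<in> I2" "\<And>i. m i - bd a i = f i + g i"
    by metis
  have "x = (\<Sum>i\<in>UNIV. lin_form B i * (m i - bd a i)) + (\<Sum>i\<in>UNIV. lin_form B i * bd a i)"
    unfolding xm by (simp add: algebra_simps sum.distrib[symmetric])
  also have "(\<Sum>i\<in>UNIV. lin_form B i * bd a i) = 0"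
    unfolding bd_def by (rule koszul_boundary_sum_zero)
  finally have "x = (\<Sum>i\<in>UNIV. lin_form B i * f i) + (\<Sum>i\<in>UNIV. lin_form B i * g i)"
    by (simp add: fg algebra_simps sum.distrib)
  moreover have "(\<Sum>i\<in>UNIV. lin_form B i * f i) \<in> I1"
    by (rule ideal_PR_sum[OF I1]) (simp add: ideal_PR_mult_left[OF I1] fg)
  moreover have "(\<Sum>i\<in>UNIV. lin_form B i * g i) \<in> I2"
    by (rule ideal_PR_sum[OF I2]) (simp add: ideal_PR_mult_left[OF I2] fg)
  moreover have "(\<Sum>i\<in>UNIV. lin_form B i * f i) \<in> u_mult B UNIV"
    "(\<Sum>i\<in>UNIV. lin_form B i * g i) \<in> u_mult B UNIV"
    unfolding u_mult_def by blast+
  ultimately show ?thesis using that by blast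
qed

lemma Int_setsum_u_mult:
  fixes B :: "int^'n::finite^'r::finite"
  defines "U \<equiv> u_mult B UNIV"
  assumes tor: "tor1_zero B UNIV (setsum I1 I2)"
    and I1: "ideal I1 PR" and I2: "ideal I2 PR"
  shows "setsum I1 U \<inter> setsum I2 U = setsum (I1 \<inter> I2) U"
proof
  have U: "ideal U PR" unfolding U_def by (rule u_mult_ideal)
  show "setsum I1 U \<inter> setsum I2 U \<subseteq> setsum (I1 \<inter> I2) U"
  proof
    fix p assume "p \<in> setsum I1 U \<inter> setsum I2 U"
    then obtain i1 u1 i2 u2 where p: "p = i1 + u1" "p = i2 + u2"
      and i: "i1 \<in> I1" "i2 \<in> I2" and u: "u1 \<in> U" "u2 \<in> U"
      unfolding setsum_def by blast
    have "i1 - i2 = u2 - u1" using p by (simp add: algebra_simps)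
    then have "i1 - i2 \<in> U" using ideal_PR_diff[OF U] u by simp
    moreover have "i1 - i2 \<in> setsum I1 I2"
      using setsum_memI[OF i(1) ideal_PR_uminus[OF I2 i(2)]] by simp
    ultimately obtain y1 y2 where y: "y1 \<in> I1 \<inter> U" "y2 \<in> I2 \<inter> U" "i1 - i2 = y1 + y2"
      using tor1_zero_split[OF tor I1 I2] unfolding U_def by blast
    have "i1 - y1 = i2 + y2" using y(3) by (simp add: algebra_simps)
    moreover have "i1 - y1 \<in> I1" using ideal_PR_diff[OF I1] i(1) y(1) by blast
    moreover have "i2 + y2 \<in> I2" using ideal_PR_add[OF I2] i(2) y(2) by blast
    ultimately have "i1 - y1 \<in> I1 \<inter> I2" by simp
    moreover have "y1 + u1 \<in> U" using ideal_PR_add[OF U] y(1) u(1) by blast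
    moreover have "p = (i1 - y1) + (y1 + u1)" using p by simp
    ultimately show "p \<in> setsum (I1 \<inter> I2) U" using setsum_memI by metis
  qed
  show "setsum (I1 \<inter> I2) U \<subseteq> setsum I1 U \<inter> setsum I2 U"
    using setsum_mono[of "I1 \<inter> I2" _ U U] by blast
qed

definition sqfree_monomial :: "'n set \<Rightarrow> 'n \<Rightarrow>\<^sub>0 nat" where
  "sqfree_monomial \<sigma> = (\<Sum>i\<in>\<sigma>. Poly_Mapping.single i 1)"

lemma lookup_sqfree_monomial:
  "Poly_Mapping.lookup (sqfree_monomial \<sigma>) i = (if i \<in> \<sigma> then 1 else 0)"
  for \<sigma> :: "'n::finite set"
  unfolding sqfree_monomial_def by (simp add: lookup_sum lookup_single when_def)

lemma keys_sqfree_monomial [simp]: "Poly_Mapping.keys (sqfree_monomial \<sigma>) = \<sigma>"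
  for \<sigma> :: "'n::finite set"
  by (auto simp: in_keys_iff lookup_sqfree_monomial split: if_splits)

lemma xs_eq_single: "xs \<sigma> = Poly_Mapping.single (sqfree_monomial \<sigma>) (1::int)"
  for \<sigma> :: "'n::finite set"
proof -
  have "finite \<sigma>" by simp
  then show ?thesis unfolding xs_def sqfree_monomial_def
    by (induction \<sigma> rule: finite_induct) (simp_all add: var_def mult_single)
qed

lemma xs_diff_mult:
  fixes \<sigma> \<tau> :: "'n::finite set"
  assumes "\<tau> \<subseteq> \<sigma>"
  shows "xs \<sigma> = xs (\<sigma> - \<tau>) * xs \<tau>"
proof -
  have "xs \<sigma> = xs ((\<sigma> - \<tau>) \<union> \<tau>)" using assms by (simp add: Un_absorb2)
  also have "\<dots> = xs (\<sigma> - \<tau>) * xs \<tau>" unfolding xs_def by (rule prod.union_disjoint) auto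
  finally show ?thesis .
qed

definition nonface_polys :: "'n set set \<Rightarrow> 'n mpoly set" where
  "nonface_polys K = {p. \<forall>m\<in>Poly_Mapping.keys p. Poly_Mapping.keys m \<notin> K}"

lemma nonface_polys_ideal:
  assumes down: "\<And>\<sigma> \<tau>. \<sigma> \<in> K \<Longrightarrow> \<tau> \<subseteq> \<sigma> \<Longrightarrow> \<tau> \<in> K"
  shows "ideal (nonface_polys K) PR"
proof (rule ideal_PR_I)
  show "0 \<in> nonface_polys K" by (simp add: nonface_polys_def)
  show "x + y \<in> nonface_polys K" if "x \<in> nonface_polys K" "y \<in> nonface_polys K" for x y
    using that keys_add[of x y] unfolding nonface_polys_def by blast
  show "- x \<in> nonface_polys K" if "x \<in> nonface_polys K" for x
    using that unfolding nonface_polys_def by simp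
  show "y * x \<in> nonface_polys K" if x: "x \<in> nonface_polys K" for x y
  proof (unfold nonface_polys_def, intro CollectI ballI)
    fix m assume "m \<in> Poly_Mapping.keys (y * x)"
    then obtain a b where "m = a + b" "b \<in> Poly_Mapping.keys x" using keys_mult by blast
    moreover have "Poly_Mapping.keys b \<subseteq> Poly_Mapping.keys (a + b)"
      by (auto simp: in_keys_iff lookup_add)
    ultimately show "Poly_Mapping.keys m \<notin> K"
      using x down unfolding nonface_polys_def by blast
  qed
qed

lemma single_nonface_mem_SR_ideal:
  fixes m :: "'n::finite \<Rightarrow>\<^sub>0 nat"
  assumes "Poly_Mapping.keys m \<notin> K"
  shows "Poly_Mapping.single m c \<in> SR_ideal K"
proof -
  define s where "s = sqfree_monomial (Poly_Mapping.keys m)"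
  have "(m - s) + s = m"
    by (rule poly_mapping_eqI)
      (auto simp: lookup_add lookup_minus s_def lookup_sqfree_monomial in_keys_iff)
  then have "Poly_Mapping.single m c = Poly_Mapping.single (m - s) c * xs (Poly_Mapping.keys m)"
    by (simp add: xs_eq_single s_def[symmetric] mult_single)
  moreover have "xs (Poly_Mapping.keys m) \<in> SR_ideal K"
    unfolding SR_ideal_def by (rule genideal_PR_self) (use assms in blast)
  ultimately show ?thesis
    using ideal_PR_mult_left[OF genideal_PR] unfolding SR_ideal_def by simp
qed

lemma SR_ideal_eq_nonface_polys:
  fixes K :: "'n::finite set set"
  assumes down: "\<And>\<sigma> \<tau>. \<sigma> \<in> K \<Longrightarrow> \<tau> \<subseteq> \<sigma> \<Longrightarrow> \<tau> \<in> K"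
  shows "SR_ideal K = nonface_polys K"
proof
  show "SR_ideal K \<subseteq> nonface_polys K"
    unfolding SR_ideal_def
    by (rule genideal_PR_minimal[OF nonface_polys_ideal[OF down]])
      (auto simp: nonface_polys_def xs_eq_single)
  show "nonface_polys K \<subseteq> SR_ideal K"
  proof
    fix p assume p: "p \<in> nonface_polys K"
    have "p = (\<Sum>m\<in>Poly_Mapping.keys p. Poly_Mapping.single m (Poly_Mapping.lookup p m))"
      by (rule poly_mapping_eqI) (simp add: lookup_sum lookup_single when_def in_keys_iff)
    also have "\<dots> \<in> SR_ideal K"
      using p single_nonface_mem_SR_ideal unfolding nonface_polys_def
      by (intro ideal_PR_sum) (auto simp: SR_ideal_def genideal_PR)
    finally show "p \<in> SR_ideal K" .
  qed
qed

lemma SR_ideal_ideal: "ideal (SR_ideal K) PR"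
  unfolding SR_ideal_def by (rule genideal_PR)

lemma xs_mem_SR_ideal: "\<sigma> \<notin> K \<Longrightarrow> xs \<sigma> \<in> SR_ideal K"
  unfolding SR_ideal_def by (rule genideal_PR_self) blast

lemma SR_ideal_antimono: "K \<subseteq> K' \<Longrightarrow> SR_ideal K' \<subseteq> SR_ideal K"
  unfolding SR_ideal_def by (rule genideal_PR_minimal[OF genideal_PR]) (auto intro: genideal_PR_self)

lemma SR_ideal_union:
  fixes K1 K2 :: "'n::finite set set"
  assumes "simplicial_complex K1" "simplicial_complex K2"
  shows "SR_ideal (K1 \<union> K2) = SR_ideal K1 \<inter> SR_ideal K2"
proof -
  have "SR_ideal (K1 \<union> K2) = nonface_polys (K1 \<union> K2)"
    by (rule SR_ideal_eq_nonface_polys) (use assms in \<open>auto simp: simplicial_complex_def\<close>)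
  also have "\<dots> = nonface_polys K1 \<inter> nonface_polys K2"
    unfolding nonface_polys_def by blast
  also have "\<dots> = SR_ideal K1 \<inter> SR_ideal K2"
    using assms by (simp add: SR_ideal_eq_nonface_polys simplicial_complex_def)
  finally show ?thesis .
qed

lemma SR_ideal_Int: "SR_ideal (K1 \<inter> K2) = setsum (SR_ideal K1) (SR_ideal K2)"
proof
  have "xs \<sigma> \<in> setsum (SR_ideal K1) (SR_ideal K2)" if "\<sigma> \<notin> K1 \<inter> K2" for \<sigma>
    using that xs_mem_SR_ideal[of \<sigma>] mem_setsum_left[OF SR_ideal_ideal[of K2]]
      mem_setsum_right[OF SR_ideal_ideal[of K1]] by blast
  then show "SR_ideal (K1 \<inter> K2) \<subseteq> setsum (SR_ideal K1) (SR_ideal K2)"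
    unfolding SR_ideal_def[of "K1 \<inter> K2"]
    by (intro genideal_PR_minimal setsum_ideal SR_ideal_ideal) blast
  have "SR_ideal K1 \<subseteq> SR_ideal (K1 \<inter> K2)" "SR_ideal K2 \<subseteq> SR_ideal (K1 \<inter> K2)"
    by (simp_all add: SR_ideal_antimono)
  then show "setsum (SR_ideal K1) (SR_ideal K2) \<subseteq> SR_ideal (K1 \<inter> K2)"
    using ideal_PR_add[OF SR_ideal_ideal[of "K1 \<inter> K2"]] unfolding setsum_def by blast
qed

lemma SR_ideal_Del:
  fixes K :: "'n::finite set set"
  shows "SR_ideal (Del Z K) = setsum (face_ideal Z) (SR_ideal K)"
proof
  have "xs \<sigma> \<in> setsum (face_ideal Z) (SR_ideal K)" if \<sigma>: "\<sigma> \<notin> Del Z K" for \<sigma>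
  proof -
    consider "\<sigma> \<notin> K" | \<tau> where "\<tau> \<in> Z" "\<tau> \<subseteq> \<sigma>"
      using \<sigma> unfolding Del_def open_star_def by blast
    then show ?thesis
    proof cases
      case 1
      then show ?thesis
        unfolding face_ideal_def by (intro mem_setsum_right genideal_PR xs_mem_SR_ideal)
    next
      case (2 \<tau>)
      have "xs \<tau> \<in> face_ideal Z"
        unfolding face_ideal_def by (rule genideal_PR_self) (use 2 in blast)
      then have "xs (\<sigma> - \<tau>) * xs \<tau> \<in> face_ideal Z"
        unfolding face_ideal_def by (rule ideal_PR_mult_left[OF genideal_PR])
      then show ?thesis
        unfolding xs_diff_mult[OF 2(2)] by (rule mem_setsum_left[OF SR_ideal_ideal])
    qed
  qed
  then show "SR_ideal (Del Z K) \<subseteq> setsum (face_ideal Z) (SR_ideal K)"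
    unfolding SR_ideal_def[of "Del Z K"]
    by (intro genideal_PR_minimal setsum_ideal SR_ideal_ideal)
      (auto simp: face_ideal_def intro: genideal_PR)
next
  have "xs \<tau> \<in> SR_ideal (Del Z K)" if "\<tau> \<in> Z" for \<tau>
  proof -
    have "\<tau> \<notin> Del Z K" using that unfolding Del_def open_star_def by blast
    then show ?thesis by (rule xs_mem_SR_ideal)
  qed
  then have "face_ideal Z \<subseteq> SR_ideal (Del Z K)"
    unfolding face_ideal_def by (intro genideal_PR_minimal SR_ideal_ideal) blast
  moreover have "SR_ideal K \<subseteq> SR_ideal (Del Z K)"
    by (rule SR_ideal_antimono) (auto simp: Del_def)
  ultimately show "setsum (face_ideal Z) (SR_ideal K) \<subseteq> SR_ideal (Del Z K)"
    using ideal_PR_add[OF SR_ideal_ideal, of _ "Del Z K"] unfolding setsum_def by blast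
qed

lemma induced_rcos:
  assumes "ideal L PR" "T \<subseteq> L" "0 \<in> T"
  shows "induced L (T +>\<^bsub>PR\<^esub> a) = L +>\<^bsub>PR\<^esub> a"
proof -
  have "\<exists>p. p \<in> T +>\<^bsub>PR\<^esub> a" using assms(3) by (force simp: PR_rcos)
  then have "(SOME p. p \<in> T +>\<^bsub>PR\<^esub> a) \<in> T +>\<^bsub>PR\<^esub> a" by (rule someI_ex)
  then have "(SOME p. p \<in> T +>\<^bsub>PR\<^esub> a) - a \<in> L" using assms(2) by (auto simp: PR_rcos)
  then show ?thesis unfolding induced_def using PR_rcos_eq_iff[OF assms(1)] by blast
qed

lemma fiber_prod_simps:
  "carrier (fiber_prod A B C eA eB) = {(a, b). a \<in> carrier A \<and> b \<in> carrier B \<and> eA a = eB b}"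
  "(a, b) \<otimes>\<^bsub>fiber_prod A B C eA eB\<^esub> (a', b') = (a \<otimes>\<^bsub>A\<^esub> a', b \<otimes>\<^bsub>B\<^esub> b')"
  "(a, b) \<oplus>\<^bsub>fiber_prod A B C eA eB\<^esub> (a', b') = (a \<oplus>\<^bsub>A\<^esub> a', b \<oplus>\<^bsub>B\<^esub> b')"
  "\<one>\<^bsub>fiber_prod A B C eA eB\<^esub> = (\<one>\<^bsub>A\<^esub>, \<one>\<^bsub>B\<^esub>)"
  "\<zero>\<^bsub>fiber_prod A B C eA eB\<^esub> = (\<zero>\<^bsub>A\<^esub>, \<zero>\<^bsub>B\<^esub>)"
  by (simp_all add: fiber_prod_def)

abbreviation quot_fiber_prod ::
    "'n mpoly set \<Rightarrow> 'n mpoly set \<Rightarrow> 'n mpoly set \<Rightarrow> ('n mpoly set \<times> 'n mpoly set) ring" where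
  "quot_fiber_prod T1 T2 T \<equiv>
     fiber_prod (PR Quot T1) (PR Quot T2) (PR Quot T) (induced T) (induced T)"

definition coset_pair ::
    "'n mpoly set \<Rightarrow> 'n mpoly set \<Rightarrow> 'n mpoly \<Rightarrow> 'n mpoly set \<times> 'n mpoly set" where
  "coset_pair T1 T2 p = (T1 +>\<^bsub>PR\<^esub> p, T2 +>\<^bsub>PR\<^esub> p)"

context
  fixes T1 T2 T :: "'n mpoly set"
  assumes T1: "ideal T1 PR" and T2: "ideal T2 PR" and T: "ideal T PR"
    and T1_sub: "T1 \<subseteq> T" and T2_sub: "T2 \<subseteq> T"
begin

lemma induced_coset_pair:
  "induced T (T1 +>\<^bsub>PR\<^esub> p) = T +>\<^bsub>PR\<^esub> p" "induced T (T2 +>\<^bsub>PR\<^esub> p) = T +>\<^bsub>PR\<^esub> p"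
  using induced_rcos[OF T T1_sub ideal_PR_zero[OF T1]] induced_rcos[OF T T2_sub ideal_PR_zero[OF T2]]
  by simp_all

lemma coset_pair_ring_hom: "coset_pair T1 T2 \<in> ring_hom PR (quot_fiber_prod T1 T2 T)"
proof (rule ring_hom_memI)
  show "coset_pair T1 T2 p \<in> carrier (quot_fiber_prod T1 T2 T)" for p
    by (auto simp: coset_pair_def fiber_prod_simps carrier_Quot_PR induced_coset_pair)
  show "coset_pair T1 T2 (p \<otimes>\<^bsub>PR\<^esub> q) =
      coset_pair T1 T2 p \<otimes>\<^bsub>quot_fiber_prod T1 T2 T\<^esub> coset_pair T1 T2 q" for p q
    by (simp add: coset_pair_def fiber_prod_simps Quot_PR_mult T1 T2)
  show "coset_pair T1 T2 (p \<oplus>\<^bsub>PR\<^esub> q) =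
      coset_pair T1 T2 p \<oplus>\<^bsub>quot_fiber_prod T1 T2 T\<^esub> coset_pair T1 T2 q" for p q
    by (simp add: coset_pair_def fiber_prod_simps Quot_PR_add T1 T2)
  show "coset_pair T1 T2 \<one>\<^bsub>PR\<^esub> = \<one>\<^bsub>quot_fiber_prod T1 T2 T\<^esub>"
    by (simp add: coset_pair_def fiber_prod_simps FactRing_def)
qed

text \<open>If \<open>p + T_1\<close> and \<open>q + T_2\<close> agree modulo \<open>T \<subseteq> T_1 + T_2\<close>, write \<open>p - q = t_1 + t_2\<close>;
  then \<open>q + t_2\<close> represents both.\<close>
lemma coset_pair_surj:
  assumes T_sub: "T \<subseteq> setsum T1 T2"
  shows "range (coset_pair T1 T2) = carrier (quot_fiber_prod T1 T2 T)"
proof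
  show "range (coset_pair T1 T2) \<subseteq> carrier (quot_fiber_prod T1 T2 T)"
    using ring_hom_memE(1)[OF coset_pair_ring_hom] by auto
  show "carrier (quot_fiber_prod T1 T2 T) \<subseteq> range (coset_pair T1 T2)"
  proof
    fix x assume "x \<in> carrier (quot_fiber_prod T1 T2 T)"
    then obtain p q where x: "x = (T1 +>\<^bsub>PR\<^esub> p, T2 +>\<^bsub>PR\<^esub> q)" and "T +>\<^bsub>PR\<^esub> p = T +>\<^bsub>PR\<^esub> q"
      by (auto simp: fiber_prod_simps carrier_Quot_PR induced_coset_pair)
    then have "p - q \<in> setsum T1 T2" using PR_rcos_eq_iff[OF T] T_sub by blast
    then obtain t1 t2 where t: "p - q = t1 + t2" "t1 \<in> T1" "t2 \<in> T2"
      unfolding setsum_def by blast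
    then have "(q + t2) - p \<in> T1" "(q + t2) - q \<in> T2"
      using ideal_PR_uminus[OF T1] by (simp_all add: algebra_simps)
    then have "coset_pair T1 T2 (q + t2) = x"
      unfolding x coset_pair_def using PR_rcos_eq_iff[OF T1] PR_rcos_eq_iff[OF T2] by simp
    then show "x \<in> range (coset_pair T1 T2)" by blast
  qed
qed

lemma a_kernel_coset_pair: "a_kernel PR (quot_fiber_prod T1 T2 T) (coset_pair T1 T2) = T1 \<inter> T2"
  by (auto simp: a_kernel_def' coset_pair_def fiber_prod_simps FactRing_def
      PR_rcos_eq_self_iff[OF T1] PR_rcos_eq_self_iff[OF T2])

lemma coset_pair_ring_hom_ring:
  assumes "T \<subseteq> setsum T1 T2"
  shows "ring_hom_ring PR (quot_fiber_prod T1 T2 T) (coset_pair T1 T2)"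
proof -
  have "ring ((quot_fiber_prod T1 T2 T)\<lparr>carrier := range (coset_pair T1 T2),
      zero := coset_pair T1 T2 0\<rparr>)"
    using P.ring_hom_imp_img_ring[OF coset_pair_ring_hom] by simp
  moreover have "coset_pair T1 T2 0 = \<zero>\<^bsub>quot_fiber_prod T1 T2 T\<^esub>"
    by (simp add: coset_pair_def fiber_prod_simps FactRing_def PR_rcos)
  ultimately have "ring (quot_fiber_prod T1 T2 T)"
    using coset_pair_surj[OF assms] by simp
  then show ?thesis
    by (rule ring_hom_ringI2[OF P.ring_axioms _ coset_pair_ring_hom])
qed

end

lemma Quot_setsum_u_mult_iso:
  fixes B :: "int^'n::finite^'r::finite"
  defines "U \<equiv> u_mult B UNIV"
  assumes I1: "ideal I1 PR" and I2: "ideal I2 PR" and J: "ideal J PR"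
    and Int_sub: "I1 \<inter> I2 \<subseteq> J" and tor: "tor1_zero B UNIV (setsum I1 I2)"
  shows "PR Quot setsum J U \<simeq>
    quot_fiber_prod (setsum I1 U) (setsum I2 U) (setsum (setsum I1 I2) U)
      Quot (coset_pair (setsum I1 U) (setsum I2 U) ` J)"
proof -
  have U: "ideal U PR" unfolding U_def by (rule u_mult_ideal)
  have T1: "ideal (setsum I1 U) PR" and T2: "ideal (setsum I2 U) PR"
    and T: "ideal (setsum (setsum I1 I2) U) PR"
    using setsum_ideal[OF I1 U] setsum_ideal[OF I2 U] setsum_ideal[OF setsum_ideal[OF I1 I2] U] .
  have T1_sub: "setsum I1 U \<subseteq> setsum (setsum I1 I2) U"
    by (rule setsum_mono) (auto intro: mem_setsum_left[OF I2])
  have T2_sub: "setsum I2 U \<subseteq> setsum (setsum I1 I2) U"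
    by (rule setsum_mono) (auto intro: mem_setsum_right[OF I1])
  have T_sub: "setsum (setsum I1 I2) U \<subseteq> setsum (setsum I1 U) (setsum I2 U)"
  proof
    fix x assume "x \<in> setsum (setsum I1 I2) U"
    then obtain i1 i2 u where "x = (i1 + i2) + u" "i1 \<in> I1" "i2 \<in> I2" "u \<in> U"
      unfolding setsum_def by blast
    moreover from this(1) have x: "x = (i1 + u) + i2" by (simp add: ac_simps)
    ultimately have "i1 + u \<in> setsum I1 U" "i2 \<in> setsum I2 U"
      by (auto intro: setsum_memI mem_setsum_left[OF U])
    then show "x \<in> setsum (setsum I1 U) (setsum I2 U)"
      unfolding x by (rule setsum_memI)
  qed
  then interpret H: ring_hom_ring PR
      "quot_fiber_prod (setsum I1 U) (setsum I2 U) (setsum (setsum I1 I2) U)"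
      "coset_pair (setsum I1 U) (setsum I2 U)"
    by (rule coset_pair_ring_hom_ring[OF T1 T2 T T1_sub T2_sub])
  have "J <+>\<^bsub>PR\<^esub> a_kernel PR
      (quot_fiber_prod (setsum I1 U) (setsum I2 U) (setsum (setsum I1 I2) U))
      (coset_pair (setsum I1 U) (setsum I2 U)) = setsum J U"
    unfolding a_kernel_coset_pair[OF T1 T2 T T1_sub T2_sub] set_add_PR
      Int_setsum_u_mult[OF tor I1 I2, folded U_def]
    using setsum_absorb[OF J U Int_sub] ideal_PR_zero[OF I1] ideal_PR_zero[OF I2] by simp
  moreover have "coset_pair (setsum I1 U) (setsum I2 U) ` carrier PR =
      carrier (quot_fiber_prod (setsum I1 U) (setsum I2 U) (setsum (setsum I1 I2) U))"
    using coset_pair_surj[OF T1 T2 T T1_sub T2_sub T_sub] by simp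
  ultimately show ?thesis using H.FactRing_iso_Quot_img[OF _ J] by simp
qed

lemma induced_pair_image_tor0_set:
  fixes B :: "int^'n::finite^'r::finite"
  defines "U \<equiv> u_mult B UNIV"
  assumes I1: "ideal I1 PR" and I2: "ideal I2 PR" and N1: "ideal N1 PR" and N2: "ideal N2 PR"
    and N2_sub: "N2 \<subseteq> I1 \<inter> I2"
  shows "{(induced (setsum I1 U) v, induced (setsum I2 U) v) | v. v \<in> tor0_set B N1 N2} =
    coset_pair (setsum I1 U) (setsum I2 U) ` N1"
proof -
  have U: "ideal U PR" unfolding U_def by (rule u_mult_ideal)
  have T1: "ideal (setsum I1 U) PR" and T2: "ideal (setsum I2 U) PR"
    using setsum_ideal[OF I1 U] setsum_ideal[OF I2 U] .
  have "0 \<in> u_mult B N1"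
    unfolding u_mult_def using ideal_PR_zero[OF N1] by (auto intro!: exI[of _ "\<lambda>_. 0"])
  then have zero: "0 \<in> tor0_sub B N1 N2"
    using setsum_memI[OF ideal_PR_zero[OF N2]] unfolding tor0_sub_def by force
  have "tor0_sub B N1 N2 \<subseteq> setsum I1 U" "tor0_sub B N1 N2 \<subseteq> setsum I2 U"
    using N2_sub u_mult_subset[of B N1] unfolding tor0_sub_def U_def
    by (intro setsum_mono; blast)+
  then show ?thesis
    unfolding tor0_set_def Setcompr_eq_image image_image
    using induced_rcos[OF T1 _ zero] induced_rcos[OF T2 _ zero]
    by (simp add: coset_pair_def)
qed

theorem lemma4p10:
  fixes K1 K2 :: "('n::finite) set set"
    and Z :: "'n set set"
    and B :: "int^'n^('r::finite)"
  defines "W \<equiv> K1 \<inter> K2"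
    and "K \<equiv> Del Z (K1 \<union> K2)"
  assumes "simplicial_complex K1" and "simplicial_complex K2"
    and "Z \<subseteq> W" and "{} \<notin> Z"
    and "open_star (K1 \<union> K2) Z \<subseteq> W"
    and "rank (\<chi> i j. real_of_int (B $ i $ j)) = CARD('r)"
    and "tor1_zero B UNIV (SR_ideal K1)"
    and "tor1_zero B UNIV (SR_ideal K2)"
    and "tor1_zero B UNIV (SR_ideal K)"
    and "tor1_zero B UNIV (SR_ideal W)"
  shows "tor0_ring B (SR_ideal K) \<simeq>
           conn_sum (tor0_ring B (SR_ideal K1)) (tor0_ring B (SR_ideal K2)) (tor0_ring B (SR_ideal W))
             (induced (tor0_sub B UNIV (SR_ideal W))) (induced (tor0_sub B UNIV (SR_ideal W)))
             (tor0_set B (setsum (face_ideal Z) (SR_ideal (K1 \<union> K2))) (SR_ideal (K1 \<union> K2)))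
             (induced (tor0_sub B UNIV (SR_ideal K1))) (induced (tor0_sub B UNIV (SR_ideal K2)))"
proof -
  have IW: "SR_ideal W = setsum (SR_ideal K1) (SR_ideal K2)"
    unfolding W_def by (rule SR_ideal_Int)
  have IK: "SR_ideal K = setsum (face_ideal Z) (SR_ideal (K1 \<union> K2))"
    unfolding K_def by (rule SR_ideal_Del)
  have IU: "SR_ideal (K1 \<union> K2) = SR_ideal K1 \<inter> SR_ideal K2"
    using SR_ideal_union[OF assms(3,4)] .
  have "SR_ideal K1 \<inter> SR_ideal K2 \<subseteq> SR_ideal K"
    unfolding IU[symmetric] K_def by (rule SR_ideal_antimono) (auto simp: Del_def)
  from Quot_setsum_u_mult_iso[OF SR_ideal_ideal SR_ideal_ideal SR_ideal_ideal this
      assms(12)[unfolded IW]]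
  show ?thesis
    unfolding conn_sum_def tor0_ring_def tor0_sub_def IK[symmetric] IW
      induced_pair_image_tor0_set[OF SR_ideal_ideal SR_ideal_ideal SR_ideal_ideal SR_ideal_ideal
        equalityD1[OF IU]] .
qed

end
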